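(* Let $\Lambda_n=\bigcup_{P\in\wp_n}P$ be the $n$-th stage of the construction, so $\Lambda=\bigcap_{n\ge1}\Lambda_n$. Then for every $\rho>0$, $$\mathcal N(\Lambda,\rho)=\inf_{n>0}\mathcal N(\Lambda_n,\rho).$$ Moreover, there exists $N_1>0$ such that $\mathcal N(\Lambda,\rho)=\mathcal N(\Lambda_n,\rho)$ for every $n>N_1$.
   Context: Let $M$ be a smooth $d$-dimensional Riemannian manifold, $N\subset M$ a compact domain with nonempty interior and piecewise smooth boundary, $U\supset N$ open. Let $g_1,\dots,g_s$ be injective $C^r$ maps ($r>1$) from $U$ into $N$ with $\|Dg\|:=\max_i\sup_x\|Dg_i(x)\|<1$, such that $g_i(U)$ are pairwise disjoint subsets of the interior of $N$ and $\partial g_i(N)\cap\partial N=\emptyset$; $\Lambda=\bigcap_{n\ge1}\bigcup_{(i_1,\dots,i_n)}g_{i_1}\circ\cdots\circ g_{i_n}(N)$, assumed volume irreducible. $\wp_n=\{g_{i_1}\circ\cdots\circ g_{i_n}(N)\}$ are the atoms of generation $n$. For a compact set $X$ and $\rho>0$, $\mathcal N(X,\rho)$ is the minimal cardinality of a finite covering of $X$ by open balls of radius $\rho$. *)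

theory Defs
  imports "HOL-Analysis.Analysis"
begin

definition cover_num :: "'a::metric_space set \<Rightarrow> real \<Rightarrow> nat" where
  "cover_num X \<rho> = Inf {card C | C. finite C \<and> X \<subseteq> (\<Union>c\<in>C. ball c \<rho>)}"

definition word_map :: "(nat \<Rightarrow> 'a \<Rightarrow> 'a) \<Rightarrow> nat list \<Rightarrow> 'a \<Rightarrow> 'a" where
  "word_map g w = foldr (\<lambda>i f. g i \<circ> f) w id"

definition atoms :: "(nat \<Rightarrow> 'a \<Rightarrow> 'a) \<Rightarrow> nat \<Rightarrow> 'a set \<Rightarrow> nat \<Rightarrow> 'a set set" where
  "atoms g s N n = {word_map g w ` N | w. length w = n \<and> set w \<subseteq> {..<s}}"

definition stage :: "(nat \<Rightarrow> 'a \<Rightarrow> 'a) \<Rightarrow> nat \<Rightarrow> 'a set \<Rightarrow> nat \<Rightarrow> 'a set" where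
  "stage g s N n = \<Union> (atoms g s N n)"

definition limit_set :: "(nat \<Rightarrow> 'a \<Rightarrow> 'a) \<Rightarrow> nat \<Rightarrow> 'a set \<Rightarrow> 'a set" where
  "limit_set g s N = (\<Inter>n\<in>{1..}. stage g s N n)"

end

theory Submission
  imports Defs
begin

text \<open>The stages form a decreasing sequence of compact sets. Take an optimal \<open>\<rho>\<close>-cover of the
  limit set: its union of open balls is an open neighbourhood of the intersection, so by
  compactness it already contains some stage, and then every later stage. Hence from that stage
  on the covering numbers of the stages, which are always at least that of the limit set, equal
  it.\<close>

lemma compact_INT:
  fixes K :: "'i \<Rightarrow> 'a::t2_space set"
  assumes "\<And>i. compact (K i)"
  shows "compact (\<Inter>i. K i)"
proof -
  have "closed (\<Inter>i. K i)"
    using assms by (intro closed_INT) (simp add: compact_imp_closed)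
  with assms have "compact (K i \<inter> (\<Inter>i. K i))" for i
    by (rule compact_Int_closed)
  moreover have "K i \<inter> (\<Inter>i. K i) = (\<Inter>i. K i)" for i
    by blast
  ultimately show ?thesis
    by metis
qed

lemma decseq_compact_eventually_subset:
  fixes K :: "nat \<Rightarrow> 'a::t2_space set"
  assumes compact: "\<And>n. compact (K n)" and dec: "decseq K"
    and "open W" and Inter_sub: "(\<Inter>n. K n) \<subseteq> W"
  shows "\<forall>\<^sub>F n in sequentially. K n \<subseteq> W"
proof -
  have "K 0 - W \<subseteq> (\<Union>n\<in>UNIV. - K n)"
    using Inter_sub by blast
  moreover have "compact (K 0 - W)"
    using compact \<open>open W\<close> by (simp add: compact_diff)
  ultimately obtain F where "finite F" and F_cover: "K 0 - W \<subseteq> (\<Union>n\<in>F. - K n)"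
    using compactE_image[of "K 0 - W" UNIV "\<lambda>n. - K n"] compact
    by (metis compact_imp_closed open_Compl)
  define m where "m = Max (insert 0 F)"
  have "K n \<subseteq> W" if "m \<le> n" for n
  proof
    fix x assume "x \<in> K n"
    then have x_in: "x \<in> K i" if "i \<le> n" for i
      using dec that by (auto simp: decseq_def)
    have "i \<le> n" if "i \<in> F" for i
      using \<open>finite F\<close> that \<open>m \<le> n\<close> by (auto simp: m_def)
    then show "x \<in> W"
      using F_cover x_in by blast
  qed
  then show ?thesis
    unfolding eventually_sequentially by blast
qed

lemma cover_num_le_card:
  assumes "finite C" and "X \<subseteq> (\<Union>c\<in>C. ball c \<rho>)"
  shows "cover_num X \<rho> \<le> card C"
  unfolding cover_num_def using assms by (intro cInf_lower) blast+

lemma cover_num_attained: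
  fixes X :: "'a::metric_space set"
  assumes "compact X" and "\<rho> > 0"
  obtains C where "finite C" "X \<subseteq> (\<Union>c\<in>C. ball c \<rho>)" "card C = cover_num X \<rho>"
proof -
  have "X \<subseteq> (\<Union>c\<in>X. ball c \<rho>)"
    using \<open>\<rho> > 0\<close> by auto
  then obtain C where "finite C" "X \<subseteq> (\<Union>c\<in>C. ball c \<rho>)"
    using compactE_image[OF \<open>compact X\<close>] by (metis open_ball)
  then have "{card C | C. finite C \<and> X \<subseteq> (\<Union>c\<in>C. ball c \<rho>)} \<noteq> {}"
    by auto
  then have "cover_num X \<rho> \<in> {card C | C. finite C \<and> X \<subseteq> (\<Union>c\<in>C. ball c \<rho>)}"
    unfolding cover_num_def by (rule Inf_nat_def1)
  then obtain C' where "cover_num X \<rho> = card C'" "finite C'" "X \<subseteq> (\<Union>c\<in>C'. ball c \<rho>)"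
    by blast
  then show ?thesis
    using that[of C'] by simp
qed

lemma cover_num_mono:
  fixes X Y :: "'a::metric_space set"
  assumes "compact Y" and "\<rho> > 0" and "X \<subseteq> Y"
  shows "cover_num X \<rho> \<le> cover_num Y \<rho>"
proof -
  obtain C where "finite C" "Y \<subseteq> (\<Union>c\<in>C. ball c \<rho>)" "card C = cover_num Y \<rho>"
    using cover_num_attained[OF assms(1,2)] .
  with \<open>X \<subseteq> Y\<close> show ?thesis
    using cover_num_le_card[of C X \<rho>] by simp
qed

lemma cover_num_Inter_decseq_eventually_eq:
  fixes K :: "nat \<Rightarrow> 'a::metric_space set"
  assumes compact: "\<And>n. compact (K n)" and dec: "decseq K" and "\<rho> > 0"
  shows "\<forall>\<^sub>F n in sequentially. cover_num (\<Inter>n. K n) \<rho> = cover_num (K n) \<rho>"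
proof -
  define L where "L = (\<Inter>n. K n)"
  have "compact L"
    unfolding L_def using compact by (rule compact_INT)
  obtain C where "finite C" and C_cover: "L \<subseteq> (\<Union>c\<in>C. ball c \<rho>)"
    and C_card: "card C = cover_num L \<rho>"
    using cover_num_attained[OF \<open>compact L\<close> \<open>\<rho> > 0\<close>] .
  have "open (\<Union>c\<in>C. ball c \<rho>)"
    by (intro open_UN) simp
  then have "\<forall>\<^sub>F n in sequentially. K n \<subseteq> (\<Union>c\<in>C. ball c \<rho>)"
    using C_cover unfolding L_def by (rule decseq_compact_eventually_subset[OF compact dec])
  then show ?thesis
  proof (rule eventually_mono)
    fix n assume "K n \<subseteq> (\<Union>c\<in>C. ball c \<rho>)"
    from cover_num_le_card[OF \<open>finite C\<close> this]
    have "cover_num (K n) \<rho> \<le> cover_num L \<rho>"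
      unfolding C_card .
    moreover have "cover_num L \<rho> \<le> cover_num (K n) \<rho>"
      unfolding L_def by (rule cover_num_mono[OF compact \<open>\<rho> > 0\<close>]) (rule INT_lower, simp)
    ultimately show "cover_num (\<Inter>n. K n) \<rho> = cover_num (K n) \<rho>"
      unfolding L_def by linarith
  qed
qed

lemma cover_num_Inter_decseq_eq_INF:
  fixes K :: "nat \<Rightarrow> 'a::metric_space set"
  assumes compact: "\<And>n. compact (K n)" and "decseq K" and "\<rho> > 0"
    and "infinite A"
  shows "cover_num (\<Inter>n. K n) \<rho> = (INF n\<in>A. cover_num (K n) \<rho>)"
proof (rule antisym)
  have "cover_num (\<Inter>n. K n) \<rho> \<le> cover_num (K n) \<rho>" for n
    by (rule cover_num_mono[OF compact \<open>\<rho> > 0\<close>]) (rule INT_lower, simp)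
  then show "cover_num (\<Inter>n. K n) \<rho> \<le> (INF n\<in>A. cover_num (K n) \<rho>)"
    using \<open>infinite A\<close> by (intro cINF_greatest) auto
  obtain m where m: "\<And>n. m \<le> n \<Longrightarrow> cover_num (\<Inter>n. K n) \<rho> = cover_num (K n) \<rho>"
    using cover_num_Inter_decseq_eventually_eq[OF assms(1-3)]
    unfolding eventually_sequentially by blast
  obtain n where "n \<in> A" "m \<le> n"
    using \<open>infinite A\<close> unfolding infinite_nat_iff_unbounded_le by blast
  then have "(INF n\<in>A. cover_num (K n) \<rho>) \<le> cover_num (K n) \<rho>"
    by (intro cINF_lower) simp_all
  with m[OF \<open>m \<le> n\<close>] show "(INF n\<in>A. cover_num (K n) \<rho>) \<le> cover_num (\<Inter>n. K n) \<rho>"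
    by simp
qed

lemma word_map_Cons: "word_map g (i # w) = g i \<circ> word_map g w"
  by (simp add: word_map_def)

lemma word_map_snoc: "word_map g (w @ [i]) = word_map g w \<circ> g i"
  by (induction w) (simp_all add: word_map_def comp_assoc)

lemma word_map_image_subset:
  assumes "\<And>i. i < s \<Longrightarrow> g i ` N \<subseteq> N" and "set w \<subseteq> {..<s}"
  shows "word_map g w ` N \<subseteq> N"
  using assms(2)
proof (induction w)
  case Nil
  then show ?case by (simp add: word_map_def)
next
  case (Cons i w)
  then have "i < s" and "word_map g w ` N \<subseteq> N"
    by auto
  then have "g i ` word_map g w ` N \<subseteq> N"
    using assms(1) by (blast dest: image_mono[of _ _ "g i"])
  then show ?case
    by (simp add: word_map_Cons image_comp)
qed

lemma continuous_on_word_map: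
  assumes cont: "\<And>i. i < s \<Longrightarrow> continuous_on N (g i)"
    and maps: "\<And>i. i < s \<Longrightarrow> g i ` N \<subseteq> N" and "set w \<subseteq> {..<s}"
  shows "continuous_on N (word_map g w)"
  using assms(3)
proof (induction w)
  case Nil
  then show ?case by (simp add: word_map_def)
next
  case (Cons i w)
  then have "i < s" and "word_map g w ` N \<subseteq> N"
    using word_map_image_subset[OF maps] by auto
  with Cons have "continuous_on N (g i \<circ> word_map g w)"
    by (intro continuous_on_compose) (auto intro: continuous_on_subset[OF cont])
  then show ?case
    by (simp add: word_map_Cons)
qed

lemma compact_stage:
  assumes "compact N" and "\<And>i. i < s \<Longrightarrow> continuous_on N (g i)"
    and "\<And>i. i < s \<Longrightarrow> g i ` N \<subseteq> N"
  shows "compact (stage g s N n)"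
proof -
  have "atoms g s N n = (\<lambda>w. word_map g w ` N) ` {w. set w \<subseteq> {..<s} \<and> length w = n}"
    unfolding atoms_def by auto
  moreover have "finite {w. set w \<subseteq> {..<s} \<and> length w = n}"
    by (rule finite_lists_length_eq) simp
  moreover have "compact (word_map g w ` N)" if "set w \<subseteq> {..<s}" for w
    using assms that by (intro compact_continuous_image continuous_on_word_map)
  ultimately show ?thesis
    unfolding stage_def by auto
qed

lemma decseq_stage:
  assumes "\<And>i. i < s \<Longrightarrow> g i ` N \<subseteq> N"
  shows "decseq (stage g s N)"
proof (rule decseq_SucI)
  fix n
  show "stage g s N (Suc n) \<subseteq> stage g s N n"
  proof
    fix x assume "x \<in> stage g s N (Suc n)"
    then obtain w where w: "set w \<subseteq> {..<s}" "length w = Suc n" "x \<in> word_map g w ` N"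
      unfolding stage_def atoms_def by auto
    then obtain v i where "w = v @ [i]"
      by (metis length_Suc_conv_rev)
    with w assms have "set v \<subseteq> {..<s}" "length v = n" "x \<in> word_map g v ` N"
      by (auto simp: word_map_snoc)
    then show "x \<in> stage g s N n"
      unfolding stage_def atoms_def by auto
  qed
qed

lemma limit_set_eq_Inter_stage:
  assumes "\<And>i. i < s \<Longrightarrow> g i ` N \<subseteq> N"
  shows "limit_set g s N = (\<Inter>n. stage g s N n)"
proof -
  have "stage g s N 1 \<subseteq> stage g s N 0"
    using decseq_stage[OF assms] by (simp add: decseq_def)
  then have "(\<Inter>n\<in>{1..}. stage g s N n) \<subseteq> stage g s N n" for n
    by (cases n) auto
  then show ?thesis
    unfolding limit_set_def by blast
qed

theorem lemma5:
  fixes g :: "nat \<Rightarrow> 'a::metric_space \<Rightarrow> 'a" and s :: nat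
    and N U :: "'a set" and \<rho> :: real
  assumes "compact N" and "interior N \<noteq> {}"
    and "open U" and "N \<subseteq> U"
    and "\<And>i. i < s \<Longrightarrow> continuous_on U (g i)"
    and "\<And>i. i < s \<Longrightarrow> inj_on (g i) U"
    and "\<And>i. i < s \<Longrightarrow> g i ` U \<subseteq> interior N"
    and "\<And>i j. i < s \<Longrightarrow> j < s \<Longrightarrow> i \<noteq> j \<Longrightarrow> g i ` U \<inter> g j ` U = {}"
    and "\<And>i. i < s \<Longrightarrow> frontier (g i ` N) \<inter> frontier N = {}"
    and "\<rho> > 0"
  shows "cover_num (limit_set g s N) \<rho> = (INF n\<in>{0<..}. cover_num (stage g s N n) \<rho>)
    \<and> (\<exists>N1>0. \<forall>n>N1. cover_num (limit_set g s N) \<rho> = cover_num (stage g s N n) \<rho>)"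
proof -
  have maps: "g i ` N \<subseteq> N" if "i < s" for i
    using assms(4,7) that interior_subset by blast
  have cont: "continuous_on N (g i)" if "i < s" for i
    using assms(4,5) that continuous_on_subset by blast
  have compact: "compact (stage g s N n)" for n
    using compact_stage \<open>compact N\<close> cont maps by blast
  have dec: "decseq (stage g s N)"
    using decseq_stage maps by blast
  have limit: "limit_set g s N = (\<Inter>n. stage g s N n)"
    using limit_set_eq_Inter_stage maps by blast
  obtain m where m: "\<And>n. m \<le> n \<Longrightarrow>
      cover_num (limit_set g s N) \<rho> = cover_num (stage g s N n) \<rho>"
    using cover_num_Inter_decseq_eventually_eq[OF compact dec \<open>\<rho> > 0\<close>]
    unfolding eventually_sequentially limit by blast
  have "infinite {0::nat<..}"
    by (simp add: infinite_Ioi)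
  from cover_num_Inter_decseq_eq_INF[OF compact dec \<open>\<rho> > 0\<close> this]
  have "cover_num (limit_set g s N) \<rho> = (INF n\<in>{0<..}. cover_num (stage g s N n) \<rho>)"
    by (simp only: limit)
  moreover have "\<forall>n > Suc m. cover_num (limit_set g s N) \<rho> = cover_num (stage g s N n) \<rho>"
    using m by simp
  ultimately show ?thesis
    by blast
qed

end
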